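(* Let $N$ be a lattice of rank $n$ with basis $\mathbf{e}_1,\ldots,\mathbf{e}_n$, $M$ its dual lattice with dual basis $\mathbf{e}_1^\vee,\ldots,\mathbf{e}_n^\vee$, and let $\mathbf{v}_0,\ldots,\mathbf{v}_n\in N$ with coordinate matrix $V=(\mathbf{v}_0,\ldots,\mathbf{v}_n)=(v_{ij})$ such that $\Sigma=\mathrm{fan}(\mathbf{v}_0,\ldots,\mathbf{v}_n)$ is a fan of $\mathbb{P}(Q)$, i.e. $\sum_{j=0}^n q_j\mathbf{v}_j=0$ and $|\det(\mathbf{v}_1,\ldots,\mathbf{v}_n)|=q_0$, with $Q=(q_0,\ldots,q_n)$ a weights vector (so $q_j=|V_j|$ for all $j$). Let $Q'$ be the reduction of $Q$, $\delta'=\mathrm{lcm}(Q')$, $\delta=\mathrm{lcm}(Q)$, let $\mathbf{n}_j$ be the primitive generator of $\mathbb{R}_{\ge0}\mathbf{v}_j\cap N$, and let $\Delta$ be the polytope of the divisor $H=(\delta'/q'_0)D_0$, namely $\Delta=\{\mathbf{u}\in M\otimes\mathbb{R}:\langle\mathbf{u},\mathbf{n}_0\rangle\geq-\delta'/q'_0,\ \langle\mathbf{u},\mathbf{n}_k\rangle\geq0\ (1\le k\le n)\}$. Then $\Delta=\mathrm{conv}(\mathbf{0},\mathbf{w}_1,\ldots,\mathbf{w}_n)$, where $\mathbf{w}_1,\ldots,\mathbf{w}_n\in M$ are distinct, integral, nonzero vectors whose coordinate matrix $W=(\mathbf{w}_1,\ldots,\mathbf{w}_n)$ in the dual basis is the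 weighted transverse matrix $W=(V^0)^*_Q=((V^0)^{-1})^T\cdot\delta\,\mathrm{diag}(1/q_1,\ldots,1/q_n)$ of $V$, where $V^0=(\mathbf{v}_1,\ldots,\mathbf{v}_n)$. Explicitly, $w_{ik}=\dfrac{\delta\,V^0_{ik}}{q_kV_0}$ for $1\le i,k\le n$, where $V^0_{ik}$ is the cofactor of $v_{ik}$ in $V^0$ and $V_0=\det(V^0)=\pm q_0$.
   Context: A weights vector is an $(n+1)$-tuple of positive integers with gcd $1$; with $d_j=\gcd(q_i:i\neq j)$, $a_j=\mathrm{lcm}(d_i:i\neq j)$, the reduction is $Q'=(q_j/a_j)$. $\mathbb{P}(Q)$ is the weighted projective space $\mathbb{P}^n/((\mu_{q_0}\oplus\cdots\oplus\mu_{q_n})/\Delta)$. $\mathrm{fan}(\mathbf{v}_0,\ldots,\mathbf{v}_n)$ is the collection of cones generated by proper subsets of $\{\mathbf{v}_0,\ldots,\mathbf{v}_n\}$. $V_j$ denotes the determinant of $V$ with column $j$ deleted. $D_0$ is the torus-invariant prime divisor of the ray through $\mathbf{v}_0$. *)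

theory Defs
  imports "HOL-Analysis.Analysis"
begin

text \<open>Lattice N = Z^n with basis indexed by the finite type 'n; M = dual lattice,
  identified with Z^n via the dual basis, pairing = standard dot product.
  The vectors v_0,...,v_n are indexed by 'n option, with None standing for the index 0
  and Some k for the index k (1 <= k <= n).\<close>

definition weights_vector :: "('i::finite \<Rightarrow> nat) \<Rightarrow> bool" where
  "weights_vector Q \<longleftrightarrow> (\<forall>j. 0 < Q j) \<and> Gcd (range Q) = 1"

definition red_d :: "('i::finite \<Rightarrow> nat) \<Rightarrow> 'i \<Rightarrow> nat" where
  "red_d Q j = Gcd (Q ` (UNIV - {j}))"

definition red_a :: "('i::finite \<Rightarrow> nat) \<Rightarrow> 'i \<Rightarrow> nat" where
  "red_a Q j = Lcm (red_d Q ` (UNIV - {j}))"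

definition reduction :: "('i::finite \<Rightarrow> nat) \<Rightarrow> 'i \<Rightarrow> nat" where
  "reduction Q j = Q j div red_a Q j"

definition lcm_weights :: "('i::finite \<Rightarrow> nat) \<Rightarrow> nat" where
  "lcm_weights Q = Lcm (range Q)"

definition real_vec :: "int ^ 'n \<Rightarrow> real ^ 'n" where
  "real_vec x = (\<chi> i. real_of_int (x $ i))"

definition ray_points :: "int ^ 'n \<Rightarrow> (int ^ 'n) set" where
  "ray_points v = {m. \<exists>c::real. c \<ge> 0 \<and> real_vec m = c *\<^sub>R real_vec v}"

definition prim_gen :: "int ^ 'n \<Rightarrow> int ^ 'n" where
  "prim_gen v = (THE u. u \<in> ray_points v \<and> u \<noteq> 0 \<and>
      (\<forall>m\<in>ray_points v. \<exists>k::nat. m = of_nat k *s u))"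

text \<open>Signed cofactor of entry (i,k) of a square matrix, i.e. (-1)^(i+k) times the
  minor; expressed order-free as the determinant of A with row i replaced by e_k.\<close>
definition cofactor_entry :: "'a::comm_ring_1 ^ 'n ^ 'n \<Rightarrow> 'n \<Rightarrow> 'n \<Rightarrow> 'a" where
  "cofactor_entry A i k = det (\<chi> r c. if r = i then (if c = k then 1 else 0) else A $ r $ c)"

end

theory Submission
  imports Defs
begin

text \<open>Up to the factor \<open>\<delta> / q\<^sub>k\<close>, the vectors \<open>w\<^sub>k\<close> form the basis dual to \<open>v\<^sub>1, \<dots>, v\<^sub>n\<close>
  (Laplace expansion of \<open>V\<^sup>0\<close> along its columns), so \<open>\<langle>w\<^sub>k, v\<^sub>l\<rangle> = \<delta> / q\<^sub>k\<close> if \<open>k = l\<close> and \<open>0\<close>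
  otherwise, and the relation \<open>\<Sum> q\<^sub>j v\<^sub>j = 0\<close> gives \<open>\<langle>w\<^sub>k, v\<^sub>0\<rangle> = - \<delta> / q\<^sub>0\<close>. Expanding \<open>u\<close> in
  the basis \<open>w\<^sub>k\<close> shows that the simplex \<open>conv(0, w\<^sub>1, \<dots>, w\<^sub>n)\<close> is cut out by \<open>\<langle>u, v\<^sub>k\<rangle> \<ge> 0\<close> and
  \<open>\<langle>u, v\<^sub>0\<rangle> \<ge> - \<delta> / q\<^sub>0\<close>. The primitive generator of each ray is a positive multiple of \<open>v\<^sub>j\<close>; for
  \<open>j = 0\<close> it is \<open>v\<^sub>0 / d\<^sub>0\<close>, because the gcd of the entries of \<open>v\<^sub>0\<close> is \<open>d\<^sub>0 = gcd(q\<^sub>1, \<dots>, q\<^sub>n)\<close>, and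
  \<open>d\<^sub>0 \<delta>' / q'\<^sub>0 = \<delta> / q\<^sub>0\<close> then identifies this polytope with \<open>\<Delta>\<close>. Finally \<open>w\<^sub>k\<close> pairs integrally
  with every \<open>v\<^sub>j\<close>, so by Cramer's rule \<open>q\<^sub>j w\<^sub>k\<close> is integral for every \<open>j\<close> (the \<open>v\<^sub>i\<close> with \<open>i \<noteq> j\<close>
  span a sublattice of index \<open>q\<^sub>j\<close>), and \<open>gcd(Q) = 1\<close> makes \<open>w\<^sub>k\<close> integral.\<close>

lemma det_replace_row_cofactor_expansion:
  fixes A :: "'a::comm_ring_1 ^ 'n::finite ^ 'n"
  shows "det (\<chi> r. if r = i then x else A $ r) = (\<Sum>k\<in>UNIV. x $ k * cofactor_entry A i k)"
proof -
  let ?e = "\<lambda>k::'n. (\<chi> c. if c = k then 1 else 0) :: 'a ^ 'n"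
  have x: "(\<Sum>k\<in>UNIV. x $ k *s ?e k) = x"
    by (simp add: vec_eq_iff sum_component if_distrib cong: if_cong)
  have cof: "cofactor_entry A i k = det (\<chi> r. if r = i then ?e k else A $ r)" for k
    unfolding cofactor_entry_def by (rule arg_cong[where f = det]) (simp add: vec_eq_iff)
  have "det (\<chi> r. if r = i then x else A $ r)
      = det (\<chi> r. if r = i then (\<Sum>k\<in>UNIV. x $ k *s ?e k) else A $ r)"
    by (simp only: x)
  also have "\<dots> = (\<Sum>k\<in>UNIV. det (\<chi> r. if r = i then x $ k *s ?e k else A $ r))"
    by (rule det_linear_row_sum) simp
  also have "\<dots> = (\<Sum>k\<in>UNIV. x $ k * cofactor_entry A i k)"
    by (simp only: det_row_mul cof)
  finally show ?thesis .
qed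

lemma cofactor_row_expansion:
  fixes A :: "'a::comm_ring_1 ^ 'n::finite ^ 'n"
  shows "(\<Sum>k\<in>UNIV. A $ r $ k * cofactor_entry A i k) = (if r = i then det A else 0)"
proof -
  have "(\<Sum>k\<in>UNIV. A $ r $ k * cofactor_entry A i k) = det (\<chi> r'. if r' = i then A $ r else A $ r')"
    by (simp add: det_replace_row_cofactor_expansion)
  also have "\<dots> = (if r = i then det A else 0)"
  proof (cases "r = i")
    case True
    then have "(\<chi> r'. if r' = i then A $ r else A $ r') = A" by (simp add: vec_eq_iff)
    with True show ?thesis by simp
  next
    case False
    then show ?thesis
      by (simp, intro det_identical_rows[of r i]) (auto simp: row_def vec_eq_iff)
  qed
  finally show ?thesis .
qed

lemma det_replace_row_lincomb:
  fixes A :: "'a::comm_ring_1 ^ 'n::finite ^ 'n"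
  shows "det (\<chi> r. if r = i then (\<Sum>m\<in>UNIV. b m *s A $ m) else A $ r) = b i * det A"
proof -
  have "det (\<chi> r. if r = i then (\<Sum>m\<in>UNIV. b m *s A $ m) else A $ r)
      = (\<Sum>k\<in>UNIV. \<Sum>m\<in>UNIV. b m * (A $ m $ k * cofactor_entry A i k))"
    by (simp add: det_replace_row_cofactor_expansion sum_component sum_distrib_right mult.assoc)
  also have "\<dots> = (\<Sum>m\<in>UNIV. b m * (if m = i then det A else 0))"
    by (subst sum.swap) (simp add: sum_distrib_left[symmetric] cofactor_row_expansion)
  finally show ?thesis by (simp add: if_distrib cong: if_cong)
qed

text \<open>Over the reals, row expansion makes the transposed cofactor matrix divided by \<open>det A\<close> a right
  inverse of \<open>A\<close>, hence also a left inverse.\<close>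
lemma cofactor_column_expansion:
  fixes A :: "int ^ 'n::finite ^ 'n"
  assumes "det A \<noteq> 0"
  shows "(\<Sum>i\<in>UNIV. cofactor_entry A i k * A $ i $ l) = (if l = k then det A else 0)"
proof -
  define R :: "real ^ 'n ^ 'n" where "R = (\<chi> i j. of_int (A $ i $ j))"
  define B :: "real ^ 'n ^ 'n" where "B = (\<chi> k i. of_int (cofactor_entry A i k) / of_int (det A))"
  have "(\<Sum>k\<in>UNIV. of_int (A $ r $ k) * (of_int (cofactor_entry A i k) / of_int (det A)))
      = (if r = i then 1 else (0::real))" for r i
    using assms by (simp add: sum_divide_distrib[symmetric] flip: of_int_mult of_int_sum
        add: cofactor_row_expansion)
  then have "R ** B = mat 1"
    by (simp add: matrix_matrix_mult_def R_def B_def mat_def vec_eq_iff)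
  then have "(B ** R) $ k $ l = mat 1 $ k $ l"
    by (simp add: matrix_left_right_inverse)
  then have "of_int (\<Sum>i\<in>UNIV. cofactor_entry A i k * A $ i $ l) / of_int (det A)
      = (if k = l then 1 else (0::real))"
    by (simp add: matrix_matrix_mult_def R_def B_def mat_def sum_divide_distrib)
  then have "of_int (\<Sum>i\<in>UNIV. cofactor_entry A i k * A $ i $ l)
      = (of_int (if l = k then det A else 0) :: real)"
    using assms by (auto simp: field_simps split: if_splits)
  then show ?thesis by (simp only: of_int_eq_iff)
qed

lemma dvd_det_if_dvd_row:
  fixes A :: "'a::comm_ring_1 ^ 'n::finite ^ 'n"
  assumes "\<And>c. d dvd A $ l $ c"
  shows "d dvd det A"
proof -
  have "det A = det (\<chi> r. if r = l then A $ l else A $ r)"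
    by (rule arg_cong[where f = det]) (simp add: vec_eq_iff)
  also have "\<dots> = (\<Sum>k\<in>UNIV. A $ l $ k * cofactor_entry A l k)"
    by (rule det_replace_row_cofactor_expansion)
  also have "d dvd \<dots>"
    using assms by (simp add: dvd_sum)
  finally show ?thesis .
qed

lemma inner_real_vec: "y \<bullet> real_vec x = (\<Sum>r\<in>UNIV. y $ r * of_int (x $ r))"
  by (simp add: inner_vec_def real_vec_def)

lemma real_vec_smult: "real_vec (c *s x) = of_int c *\<^sub>R real_vec x"
  by (simp add: real_vec_def vec_eq_iff)

lemma real_vec_sum: "real_vec (\<Sum>j\<in>S. x j) = (\<Sum>j\<in>S. real_vec (x j))"
  by (simp add: real_vec_def vec_eq_iff sum_component)

text \<open>Cramer's rule: \<open>y $ i * det T\<close> is a combination of the pairings of \<open>y\<close> with the rows of \<open>T\<close>,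
  with cofactors of \<open>T\<close> as coefficients.\<close>
lemma Ints_mult_det_if_inner_rows_Ints:
  fixes T :: "int ^ 'n::finite ^ 'n" and y :: "real ^ 'n"
  assumes "\<And>c. y \<bullet> real_vec (T $ c) \<in> \<int>"
  shows "y $ i * of_int (det T) \<in> \<int>"
proof -
  let ?A = "transpose T"
  have "y $ i * of_int (det T) = (\<Sum>r\<in>UNIV. y $ r * of_int (if r = i then det ?A else 0))"
    by (simp add: if_distrib cong: if_cong)
  also have "\<dots> = (\<Sum>r\<in>UNIV. \<Sum>c\<in>UNIV. y $ r * (of_int (?A $ r $ c) * of_int (cofactor_entry ?A i c)))"
    by (simp add: cofactor_row_expansion[symmetric] sum_distrib_left)
  also have "\<dots> = (\<Sum>c\<in>UNIV. of_int (cofactor_entry ?A i c) * (y \<bullet> real_vec (T $ c)))"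
    by (subst sum.swap) (simp add: inner_real_vec transpose_def sum_distrib_right ac_simps)
  also have "\<dots> \<in> \<int>"
    using assms by (intro Ints_sum Ints_mult) auto
  finally show ?thesis .
qed

lemma sum_UNIV_option:
  fixes f :: "'a::finite option \<Rightarrow> 'b::comm_monoid_add"
  shows "(\<Sum>j\<in>UNIV. f j) = f None + (\<Sum>k\<in>UNIV. f (Some k))"
  by (simp add: UNIV_option_conv sum.reindex)

lemma sum_scaleR_mem_convex_hull_insert_0:
  fixes x :: "'i::finite \<Rightarrow> 'a::real_vector"
  assumes "\<And>i. c i \<ge> 0" and "(\<Sum>i\<in>UNIV. c i) \<le> 1"
  shows "(\<Sum>i\<in>UNIV. c i *\<^sub>R x i) \<in> convex hull (insert 0 (range x))"
proof -
  define a where "a j = (case j of None \<Rightarrow> 1 - sum c UNIV | Some i \<Rightarrow> c i)" for j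
  define y where "y j = (case j of None \<Rightarrow> 0 | Some i \<Rightarrow> x i)" for j
  have "(\<Sum>j\<in>UNIV. a j *\<^sub>R y j) \<in> convex hull (insert 0 (range x))"
    by (rule convex_sum)
      (use assms in \<open>auto simp: a_def y_def sum_UNIV_option hull_inc split: option.split\<close>)
  then show ?thesis
    by (simp add: a_def y_def sum_UNIV_option)
qed

lemma Ints_if_mult_Ints_Gcd_eq_1:
  fixes a :: "'i::finite \<Rightarrow> int" and t :: real
  assumes gcd: "Gcd (range a) = 1" and mult: "\<And>i. t * of_int (a i) \<in> \<int>"
  shows "t \<in> \<int>"
proof -
  obtain j where j: "a j \<noteq> 0"
    using gcd by (metis Gcd_0_iff image_subset_iff insertCI subsetI zero_neq_one)
  obtain p where p: "t * of_int (a j) = of_int p"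
    using mult[of j] by (auto elim: Ints_cases)
  have "a j dvd p * a i" for i
  proof -
    obtain r where r: "t * of_int (a i) = of_int r"
      using mult[of i] by (auto elim: Ints_cases)
    have "real_of_int (p * a i) = of_int (r * a j)"
      using p r by (simp flip: p r add: ac_simps)
    then show ?thesis by (simp only: of_int_eq_iff) (metis dvd_triv_right)
  qed
  then have "a j dvd Gcd ((*) p ` range a)"
    by (auto intro!: Gcd_greatest)
  also have "Gcd ((*) p ` range a) = normalize p"
    by (simp add: Gcd_mult gcd)
  finally obtain s where "p = a j * s"
    by (auto elim: dvdE)
  with p j have "t = of_int s" by (simp add: field_simps)
  then show ?thesis by simp
qed

lemma Gcd_vec_pos:
  fixes x :: "int ^ 'n::finite"
  assumes "x \<noteq> 0"
  shows "Gcd (range (($) x)) > 0"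
  using assms by (auto simp: vec_eq_iff Gcd_0_iff order.strict_iff_order)

lemma ray_points_primitive:
  fixes u :: "int ^ 'n::finite"
  assumes primitive: "Gcd (range (($) u)) = 1"
  shows "ray_points u = range (\<lambda>k::nat. of_nat k *s u)"
proof (intro set_eqI iffI)
  fix m assume "m \<in> ray_points u"
  then obtain c :: real where c: "c \<ge> 0" "real_vec m = c *\<^sub>R real_vec u"
    unfolding ray_points_def by auto
  then have m: "of_int (m $ i) = c * of_int (u $ i)" for i
    by (auto simp: real_vec_def vec_eq_iff)
  have "c \<in> \<int>"
    using primitive by (rule Ints_if_mult_Ints_Gcd_eq_1) (simp flip: m)
  then obtain z where "c = of_int z"
    by (auto elim: Ints_cases)
  with c(1) have "c = of_nat (nat z)"
    by simp
  with m have "of_int (m $ i) = (of_int (int (nat z) * u $ i) :: real)" for i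
    by simp
  then have "m = of_nat (nat z) *s u"
    by (simp only: of_int_eq_iff) (simp add: vec_eq_iff)
  then show "m \<in> range (\<lambda>k::nat. of_nat k *s u)" by blast
next
  fix m assume "m \<in> range (\<lambda>k::nat. of_nat k *s u)"
  then obtain k :: nat where "m = of_nat k *s u" by blast
  then show "m \<in> ray_points u"
    unfolding ray_points_def by (intro CollectI exI[of _ "real k"]) (simp add: real_vec_smult)
qed

lemma prim_gen_primitive:
  fixes u :: "int ^ 'n::finite"
  assumes primitive: "Gcd (range (($) u)) = 1"
  shows "prim_gen u = u"
proof -
  note ray = ray_points_primitive[OF primitive]
  have "u \<noteq> 0"
    using primitive by auto
  then obtain i where i: "u $ i \<noteq> 0"
    by (auto simp: vec_eq_iff)
  have u: "u \<in> ray_points u"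
    unfolding ray by (rule range_eqI[of _ _ 1]) simp
  show ?thesis
    unfolding prim_gen_def
  proof (rule the_equality)
    show "u \<in> ray_points u \<and> u \<noteq> 0 \<and> (\<forall>m\<in>ray_points u. \<exists>k::nat. m = of_nat k *s u)"
      using u \<open>u \<noteq> 0\<close> unfolding ray by blast
  next
    fix u' assume u': "u' \<in> ray_points u \<and> u' \<noteq> 0 \<and> (\<forall>m\<in>ray_points u. \<exists>k::nat. m = of_nat k *s u')"
    with u obtain k :: nat where k: "u = of_nat k *s u'"
      by blast
    from u' obtain k' :: nat where k': "u' = of_nat k' *s u"
      unfolding ray by blast
    have "u = of_nat (k * k') *s u"
      using k k' by (simp add: vector_smult_assoc)
    then have "of_nat (k * k') * u $ i = u $ i"
      by (metis vector_smult_component)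
    with i have "int (k * k') = int 1"
      by simp
    then have "k * k' = 1"
      by (simp only: of_nat_eq_iff)
    with k' show "u' = u" by simp
  qed
qed

lemma ray_points_smult_pos:
  assumes "c > 0"
  shows "ray_points (c *s x) = ray_points x"
proof -
  have "(\<exists>d\<ge>0. y = d *\<^sub>R (of_int c *\<^sub>R z)) \<longleftrightarrow> (\<exists>d\<ge>0. y = d *\<^sub>R z)" for y z :: "real ^ 'n"
  proof
    assume "\<exists>d\<ge>0. y = d *\<^sub>R (of_int c *\<^sub>R z)"
    then obtain d where "d \<ge> 0" "y = d *\<^sub>R (of_int c *\<^sub>R z)" by blast
    with assms show "\<exists>d\<ge>0. y = d *\<^sub>R z"
      by (intro exI[of _ "d * of_int c"]) auto
  next
    assume "\<exists>d\<ge>0. y = d *\<^sub>R z"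
    then obtain d where "d \<ge> 0" "y = d *\<^sub>R z" by blast
    with assms show "\<exists>d\<ge>0. y = d *\<^sub>R (of_int c *\<^sub>R z)"
      by (intro exI[of _ "d / of_int c"]) auto
  qed
  then show ?thesis
    unfolding ray_points_def real_vec_smult by blast
qed

lemma prim_gen_eq:
  fixes x :: "int ^ 'n::finite"
  assumes "x \<noteq> 0"
  shows "real_vec (prim_gen x) = (1 / of_int (Gcd (range (($) x)))) *\<^sub>R real_vec x"
proof -
  define g where "g = Gcd (range (($) x))"
  have g: "g > 0"
    unfolding g_def using assms by (rule Gcd_vec_pos)
  define u where "u = (\<chi> i. x $ i div g)"
  have x: "x = g *s u"
    unfolding u_def g_def by (simp add: vec_eq_iff)
  have "range (($) x) = (*) g ` range (($) u)"
    by (subst x) (auto simp: image_image)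
  then have "g = Gcd ((*) g ` range (($) u))"
    by (simp add: g_def)
  then have primitive: "Gcd (range (($) u)) = 1"
    using g by (simp add: Gcd_mult)
  have "ray_points x = ray_points u"
    unfolding x using g by (rule ray_points_smult_pos)
  then have "prim_gen x = prim_gen u"
    unfolding prim_gen_def by simp
  also have "\<dots> = u"
    using primitive by (rule prim_gen_primitive)
  finally have "prim_gen x = u" .
  moreover have "real_vec x = of_int g *\<^sub>R real_vec u"
    by (subst x) (rule real_vec_smult)
  ultimately show ?thesis
    using g unfolding g_def[symmetric] by simp
qed

locale weights =
  fixes Q :: "'i::finite \<Rightarrow> nat"
  assumes weights_vector: "weights_vector Q"
    and nontrivial: "\<And>j::'i. \<exists>k. k \<noteq> j"
begin

lemma weight_pos: "Q j > 0"
  using weights_vector unfolding weights_vector_def by auto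

lemma weight_nonzero [simp]: "Q j \<noteq> 0"
  using weight_pos[of j] by simp

lemma Gcd_weights: "Gcd (range Q) = 1"
  using weights_vector unfolding weights_vector_def by auto

lemma red_d_dvd_weight: "k \<noteq> j \<Longrightarrow> red_d Q j dvd Q k"
  unfolding red_d_def by (rule Gcd_dvd) auto

lemma red_d_pos: "red_d Q j > 0"
proof -
  obtain k where "k \<noteq> j"
    using nontrivial by blast
  then show ?thesis
    using dvd_pos_nat[OF weight_pos red_d_dvd_weight] by blast
qed

lemma red_a_dvd_weight: "red_a Q j dvd Q j"
  unfolding red_a_def by (rule Lcm_least) (auto intro: red_d_dvd_weight)

lemma coprime_red_d_weight: "coprime (red_d Q j) (Q j)"
proof -
  have "gcd (red_d Q j) (Q j) dvd Q k" for k
    by (cases "k = j") (auto intro: dvd_trans[OF gcd_dvd1 red_d_dvd_weight])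
  then have "gcd (red_d Q j) (Q j) dvd Gcd (range Q)"
    by (auto intro!: Gcd_greatest)
  then show ?thesis
    using Gcd_weights by (simp add: coprime_iff_gcd_eq_1)
qed

lemma red_a_mult_red_d: "red_a Q j * red_d Q j = Lcm (range (red_d Q))"
proof -
  have "range (red_d Q) = insert (red_d Q j) (red_d Q ` (UNIV - {j}))"
    by blast
  then have "Lcm (range (red_d Q)) = lcm (red_d Q j) (red_a Q j)"
    by (simp add: red_a_def)
  also have "\<dots> = red_d Q j * red_a Q j"
    using coprime_divisors[OF dvd_refl red_a_dvd_weight coprime_red_d_weight]
    by (simp add: lcm_coprime)
  finally show ?thesis by simp
qed

lemma reduction_pos: "reduction Q j > 0"
  unfolding reduction_def using red_a_dvd_weight weight_pos
  by (metis dvd_div_eq_0_iff neq0_conv)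

lemma Lcm_red_d_mult_reduction: "Lcm (range (red_d Q)) * reduction Q j = Q j * red_d Q j"
  unfolding reduction_def red_a_mult_red_d[of j, symmetric]
  using red_a_dvd_weight[of j] by (simp add: ac_simps)

lemma lcm_weights_reduction: "lcm_weights (reduction Q) * Lcm (range (red_d Q)) = lcm_weights Q"
proof -
  have "lcm_weights (reduction Q) * Lcm (range (red_d Q))
      = Lcm ((*) (Lcm (range (red_d Q))) ` range (reduction Q))"
    unfolding lcm_weights_def by (subst Lcm_mult) (auto simp: mult.commute)
  also have "\<dots> = Lcm (range (\<lambda>j. Q j * red_d Q j))"
    by (simp only: image_image Lcm_red_d_mult_reduction)
  also have "\<dots> = Lcm (range Q)"
  proof (rule dvd_antisym)
    show "Lcm (range (\<lambda>j. Q j * red_d Q j)) dvd Lcm (range Q)"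
    proof (rule Lcm_least, clarify)
      fix j :: 'i
      obtain k where "k \<noteq> j"
        using nontrivial by blast
      then have "red_d Q j dvd Lcm (range Q)"
        by (meson dvd_Lcm dvd_trans rangeI red_d_dvd_weight)
      moreover have "Q j dvd Lcm (range Q)"
        by simp
      ultimately have "lcm (Q j) (red_d Q j) dvd Lcm (range Q)"
        by simp
      moreover have "lcm (Q j) (red_d Q j) = Q j * red_d Q j"
        using coprime_red_d_weight[of j] by (simp add: lcm_coprime coprime_commute)
      ultimately show "Q j * red_d Q j dvd Lcm (range Q)"
        by simp
    qed
    show "Lcm (range Q) dvd Lcm (range (\<lambda>j. Q j * red_d Q j))"
      by (rule Lcm_least) (auto intro: dvd_Lcm dvd_mult_left)
  qed
  finally show ?thesis
    unfolding lcm_weights_def .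
qed

lemma red_d_mult_lcm_weights_reduction:
  "red_d Q j * lcm_weights (reduction Q) * Q j = lcm_weights Q * reduction Q j"
proof -
  have "red_d Q j * lcm_weights (reduction Q) * Q j = lcm_weights (reduction Q) * (Q j * red_d Q j)"
    by (simp only: ac_simps)
  also have "\<dots> = lcm_weights (reduction Q) * Lcm (range (red_d Q)) * reduction Q j"
    by (simp only: Lcm_red_d_mult_reduction mult.assoc)
  also have "\<dots> = lcm_weights Q * reduction Q j"
    by (simp only: lcm_weights_reduction)
  finally show ?thesis .
qed

lemma lcm_weights_pos: "lcm_weights Q > 0"
proof -
  have "0 \<notin> range Q"
    by (metis imageE weight_nonzero)
  then show ?thesis
    unfolding lcm_weights_def by (metis Lcm_0_iff_nat finite finite_imageI gr0I)
qed

lemma lcm_weights_div_weight_Ints: "real (lcm_weights Q) / real (Q j) \<in> \<int>"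
proof -
  obtain t where "lcm_weights Q = Q j * t"
    unfolding lcm_weights_def by (meson dvd_Lcm dvdE rangeI)
  then show ?thesis
    using weight_pos[of j] by simp
qed

end

locale weighted_fan = weights Q for Q :: "'n::finite option \<Rightarrow> nat" +
  fixes v :: "'n option \<Rightarrow> int ^ 'n"
  assumes relation: "(\<Sum>j\<in>UNIV. int (Q j) *s v j) = 0"
    and abs_det: "\<bar>det (\<chi> i k. v (Some k) $ i)\<bar> = int (Q None)"
begin

definition V0 :: "int ^ 'n ^ 'n" where
  "V0 = (\<chi> i k. v (Some k) $ i)"

text \<open>The matrix whose rows are the \<open>v j\<close> with \<open>j \<noteq> i\<close>, up to order: for \<open>i = Some l\<close> the row
  \<open>v (Some l)\<close> is replaced by \<open>v None\<close>.\<close>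
definition deleted :: "'n option \<Rightarrow> int ^ 'n ^ 'n" where
  "deleted i = (\<chi> r. if Some r = i then v None else v (Some r))"

definition transverse :: "'n \<Rightarrow> real ^ 'n" where
  "transverse k = (\<chi> i. real (lcm_weights Q) * of_int (cofactor_entry V0 i k)
                          / (real (Q (Some k)) * of_int (det V0)))"

definition polytope :: "(real ^ 'n) set" where
  "polytope = {u. u \<bullet> real_vec (v None) \<ge> - real (lcm_weights Q) / real (Q None) \<and>
                  (\<forall>k. u \<bullet> real_vec (v (Some k)) \<ge> 0)}"

lemma abs_det_V0: "\<bar>det V0\<bar> = int (Q None)"
  using abs_det unfolding V0_def .

lemma det_V0_nonzero: "det V0 \<noteq> 0"
  using abs_det_V0 weight_pos[of None] by auto

lemma relation_v0: "int (Q None) *s v None = (\<Sum>l\<in>UNIV. (- int (Q (Some l))) *s v (Some l))"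
  using relation by (simp add: sum_UNIV_option vec_eq_iff sum_component sum_negf eq_neg_iff_add_eq_0)

lemma inner_relation:
  "real (Q None) * (u \<bullet> real_vec (v None)) = - (\<Sum>l\<in>UNIV. real (Q (Some l)) * (u \<bullet> real_vec (v (Some l))))"
  using arg_cong[OF relation_v0, of "\<lambda>x. u \<bullet> real_vec x"]
  by (simp add: real_vec_smult real_vec_sum inner_sum_right sum_negf)

lemma abs_det_deleted: "\<bar>det (deleted i)\<bar> = int (Q i)"
proof (cases i)
  case None
  have "deleted None = transpose V0"
    by (simp add: deleted_def V0_def transpose_def vec_eq_iff)
  then show ?thesis
    using None abs_det_V0 by simp
next
  case (Some l)
  let ?R = "transpose V0"
  have R: "?R $ r = v (Some r)" for r
    by (simp add: V0_def transpose_def vec_eq_iff)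
  have "int (Q None) * det (deleted i) = det (\<chi> r. if r = l then int (Q None) *s v None else ?R $ r)"
    unfolding deleted_def Some R by (simp add: det_row_mul)
  also have "\<dots> = det (\<chi> r. if r = l then (\<Sum>m\<in>UNIV. (- int (Q (Some m))) *s ?R $ m) else ?R $ r)"
    by (simp only: relation_v0 R)
  also have "\<dots> = - int (Q i) * det V0"
    by (simp only: det_replace_row_lincomb det_transpose Some)
  finally have "int (Q None) * \<bar>det (deleted i)\<bar> = int (Q i) * int (Q None)"
    by (metis abs_det_V0 abs_minus_cancel abs_mult abs_of_nat)
  then show ?thesis
    using weight_pos[of None] by (simp add: mult.commute)
qed

lemma inner_transverse_Some:
  "transverse k \<bullet> real_vec (v (Some l))
     = (if l = k then real (lcm_weights Q) / real (Q (Some k)) else 0)"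
proof -
  have "transverse k \<bullet> real_vec (v (Some l))
      = real (lcm_weights Q) / (real (Q (Some k)) * of_int (det V0))
        * of_int (\<Sum>i\<in>UNIV. cofactor_entry V0 i k * V0 $ i $ l)"
    by (simp add: transverse_def inner_real_vec V0_def sum_distrib_left mult.assoc)
  then show ?thesis
    using det_V0_nonzero by (simp add: cofactor_column_expansion)
qed

lemma inner_transverse_None:
  "transverse k \<bullet> real_vec (v None) = - real (lcm_weights Q) / real (Q None)"
proof -
  have "real (Q None) * (transverse k \<bullet> real_vec (v None)) = - real (lcm_weights Q)"
    using weight_pos[of "Some k"]
    by (simp add: inner_relation inner_transverse_Some if_distrib cong: if_cong)
  then show ?thesis
    using weight_pos[of None] by (simp add: field_simps)
qed

lemma transverse_expansion:
  "u = (\<Sum>k\<in>UNIV. (u \<bullet> real_vec (v (Some k)) * real (Q (Some k)) / real (lcm_weights Q)) *\<^sub>R transverse k)"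
proof -
  have "(\<Sum>k\<in>UNIV. (u \<bullet> real_vec (v (Some k)) * real (Q (Some k)) / real (lcm_weights Q)) *\<^sub>R transverse k) $ i
      = (\<Sum>k\<in>UNIV. \<Sum>j\<in>UNIV. u $ j * of_int (V0 $ j $ k * cofactor_entry V0 i k) / of_int (det V0))" for i
    using lcm_weights_pos weight_pos
    by (simp add: sum_component transverse_def inner_real_vec V0_def sum_distrib_right sum_divide_distrib
        field_simps)
  also have "\<dots> i = (\<Sum>j\<in>UNIV. u $ j * of_int (\<Sum>k\<in>UNIV. V0 $ j $ k * cofactor_entry V0 i k) / of_int (det V0))" for i
    by (subst sum.swap) (simp add: sum_distrib_left sum_divide_distrib)
  also have "\<dots> i = u $ i" for i
  proof -
    have delta: "(\<lambda>j. u $ j * of_int (if j = i then det V0 else 0) / of_int (det V0))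
        = (\<lambda>j. if j = i then u $ i else 0)"
      using det_V0_nonzero by auto
    show ?thesis
      unfolding cofactor_row_expansion delta by simp
  qed
  finally show ?thesis
    by (simp add: vec_eq_iff)
qed

lemma v_nonzero: "v j \<noteq> 0"
proof -
  have "transverse (case j of None \<Rightarrow> undefined | Some k \<Rightarrow> k) \<bullet> real_vec (v j) \<noteq> 0"
    using lcm_weights_pos by (cases j) (simp_all add: inner_transverse_None inner_transverse_Some)
  then show ?thesis
    by (auto simp: inner_real_vec)
qed

lemma Gcd_v0: "Gcd (range (($) (v None))) = int (red_d Q None)"
proof (rule zdvd_antisym_nonneg)
  have dvd_weight: "Gcd (range (($) (v None))) dvd int (Q (Some l))" for l
  proof -
    have "Gcd (range (($) (v None))) dvd det (deleted (Some l))"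
      by (rule dvd_det_if_dvd_row[of _ _ l]) (simp add: deleted_def)
    then show ?thesis
      by (simp flip: abs_det_deleted)
  qed
  have "Gcd (range (($) (v None))) dvd Gcd ((\<lambda>j. int (Q j)) ` (UNIV - {None}))"
  proof (rule Gcd_greatest)
    fix a assume "a \<in> (\<lambda>j. int (Q j)) ` (UNIV - {None})"
    then obtain j where "j \<noteq> None" "a = int (Q j)"
      by blast
    then obtain l where "a = int (Q (Some l))"
      by (cases j) auto
    then show "Gcd (range (($) (v None))) dvd a"
      using dvd_weight by simp
  qed
  then show "Gcd (range (($) (v None))) dvd int (red_d Q None)"
    unfolding red_d_def Gcd_int_eq[symmetric] image_image .
  have "int (red_d Q None) dvd v None $ i" for i
  proof -
    have "int (red_d Q None) dvd (\<Sum>l\<in>UNIV. int (Q (Some l)) * v (Some l) $ i)"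
      by (intro dvd_sum dvd_mult2) (simp add: red_d_dvd_weight)
    also have "(\<Sum>l\<in>UNIV. int (Q (Some l)) * v (Some l) $ i) = - (int (Q None) * v None $ i)"
      using arg_cong[OF relation_v0, of "\<lambda>x. x $ i"] by (simp add: sum_component sum_negf)
    finally have "int (red_d Q None) dvd int (Q None) * v None $ i"
      by simp
    moreover have "coprime (int (red_d Q None)) (int (Q None))"
      using coprime_red_d_weight by simp
    ultimately show ?thesis
      using coprime_dvd_mult_right_iff by blast
  qed
  then show "int (red_d Q None) dvd Gcd (range (($) (v None)))"
    by (auto intro: Gcd_greatest)
qed simp_all

lemma inner_transverse_Ints: "transverse k \<bullet> real_vec (v j) \<in> \<int>"
  using lcm_weights_div_weight_Ints
  by (cases j) (simp_all add: inner_transverse_None inner_transverse_Some)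

lemma transverse_integral: "\<exists>m. transverse k = real_vec m"
proof -
  have multiple: "transverse k $ i * of_int (int (Q j)) \<in> \<int>" for i j
  proof -
    have "transverse k $ i * of_int (det (deleted j)) \<in> \<int>"
      by (rule Ints_mult_det_if_inner_rows_Ints) (simp add: deleted_def inner_transverse_Ints)
    moreover have "real (Q j) = \<bar>of_int (det (deleted j))\<bar>"
      by (simp flip: of_int_abs add: abs_det_deleted)
    ultimately show ?thesis
      by (cases "det (deleted j) \<ge> 0") (simp_all add: abs_if)
  qed
  have "range (\<lambda>j. int (Q j)) = int ` range Q"
    by auto
  then have coprime: "Gcd (range (\<lambda>j. int (Q j))) = 1"
    using Gcd_weights by (simp only: Gcd_int_eq)
  have "of_int \<lfloor>transverse k $ i\<rfloor> = transverse k $ i" for i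
    using Ints_if_mult_Ints_Gcd_eq_1[OF coprime multiple] by (auto elim: Ints_cases)
  then have "real_vec (\<chi> i. \<lfloor>transverse k $ i\<rfloor>) = transverse k"
    by (simp add: real_vec_def vec_eq_iff)
  then show ?thesis
    by metis
qed

lemma transverse_nonzero: "transverse k \<noteq> 0"
  using inner_transverse_Some[of k k] lcm_weights_pos by auto

lemma inj_transverse: "inj transverse"
proof (rule injI)
  fix k l
  assume "transverse k = transverse l"
  then have "transverse l \<bullet> real_vec (v (Some k)) \<noteq> 0"
    using inner_transverse_Some[of k k] lcm_weights_pos by auto
  then show "k = l"
    by (simp add: inner_transverse_Some split: if_splits)
qed

lemma polytope_eq_convex_hull: "polytope = convex hull (insert 0 (range transverse))"
proof
  show "convex hull (insert 0 (range transverse)) \<subseteq> polytope"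
  proof (rule hull_minimal)
    show "insert 0 (range transverse) \<subseteq> polytope"
      unfolding polytope_def using lcm_weights_pos
      by (auto simp: inner_transverse_None inner_transverse_Some)
    have "polytope = {u. real_vec (v None) \<bullet> u \<ge> - real (lcm_weights Q) / real (Q None)}
                     \<inter> (\<Inter>k. {u. real_vec (v (Some k)) \<bullet> u \<ge> 0})"
      unfolding polytope_def by (auto simp: inner_commute)
    then show "convex polytope"
      by (simp add: convex_Int convex_INT convex_halfspace_ge)
  qed
  show "polytope \<subseteq> convex hull (insert 0 (range transverse))"
  proof
    fix u assume u: "u \<in> polytope"
    define c where "c k = u \<bullet> real_vec (v (Some k)) * real (Q (Some k)) / real (lcm_weights Q)" for k
    have "c k \<ge> 0" for k
      using u lcm_weights_pos unfolding c_def polytope_def by auto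
    moreover have "(\<Sum>k\<in>UNIV. c k) \<le> 1"
    proof -
      have "(\<Sum>k\<in>UNIV. c k) = - (real (Q None) * (u \<bullet> real_vec (v None))) / real (lcm_weights Q)"
        unfolding c_def inner_relation by (simp add: sum_divide_distrib ac_simps)
      also have "\<dots> \<le> 1"
        using u weight_pos[of None] lcm_weights_pos unfolding polytope_def by (simp add: field_simps)
      finally show ?thesis .
    qed
    ultimately have "(\<Sum>k\<in>UNIV. c k *\<^sub>R transverse k) \<in> convex hull (insert 0 (range transverse))"
      by (rule sum_scaleR_mem_convex_hull_insert_0)
    then show "u \<in> convex hull (insert 0 (range transverse))"
      unfolding c_def by (simp flip: transverse_expansion)
  qed
qed

lemma Delta_eq_polytope:
  "{u. u \<bullet> real_vec (prim_gen (v None)) \<ge> - (real (lcm_weights (reduction Q)) / real (reduction Q None)) \<and>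
       (\<forall>k. u \<bullet> real_vec (prim_gen (v (Some k))) \<ge> 0)} = polytope"
proof -
  have "real (red_d Q None) * real (lcm_weights (reduction Q)) * real (Q None)
      = real (lcm_weights Q) * real (reduction Q None)"
    by (simp only: of_nat_mult[symmetric] red_d_mult_lcm_weights_reduction)
  then have scale: "real (lcm_weights (reduction Q)) / real (reduction Q None) * real (red_d Q None)
      = real (lcm_weights Q) / real (Q None)"
    using reduction_pos[of None] by (simp add: field_simps)
  have facet0: "u \<bullet> real_vec (prim_gen (v None)) \<ge> - (real (lcm_weights (reduction Q)) / real (reduction Q None))
      \<longleftrightarrow> u \<bullet> real_vec (v None) \<ge> - real (lcm_weights Q) / real (Q None)" for u
  proof -
    have "u \<bullet> real_vec (prim_gen (v None)) \<ge> - (real (lcm_weights (reduction Q)) / real (reduction Q None))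
      \<longleftrightarrow> u \<bullet> real_vec (v None) / real (red_d Q None)
          \<ge> - (real (lcm_weights (reduction Q)) / real (reduction Q None))"
      by (simp add: prim_gen_eq[OF v_nonzero] Gcd_v0)
    also have "\<dots> \<longleftrightarrow> u \<bullet> real_vec (v None)
          \<ge> - (real (lcm_weights (reduction Q)) / real (reduction Q None)) * real (red_d Q None)"
      using red_d_pos[of None] by (simp add: le_divide_eq)
    also have "- (real (lcm_weights (reduction Q)) / real (reduction Q None)) * real (red_d Q None)
        = - real (lcm_weights Q) / real (Q None)"
      using scale by simp
    finally show ?thesis .
  qed
  have facet: "u \<bullet> real_vec (prim_gen (v (Some k))) \<ge> 0 \<longleftrightarrow> u \<bullet> real_vec (v (Some k)) \<ge> 0" for u k
    using Gcd_vec_pos[OF v_nonzero[of "Some k"]]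
    by (simp add: prim_gen_eq[OF v_nonzero] zero_le_divide_iff)
  show ?thesis
    unfolding polytope_def facet0 facet ..
qed

end

theorem mainTheorem8:
  fixes v :: "'n option \<Rightarrow> int ^ 'n::finite"
    and Q :: "'n option \<Rightarrow> nat"
  defines "V0 \<equiv> (\<chi> i k. v (Some k) $ i) :: int ^ 'n ^ 'n"
  assumes wv: "weights_vector Q"
    and rel: "(\<Sum>j\<in>UNIV. int (Q j) *s v j) = 0"
    and dt: "\<bar>det V0\<bar> = int (Q None)"
  defines "\<delta> \<equiv> lcm_weights Q"
    and "\<delta>' \<equiv> lcm_weights (reduction Q)"
  defines "\<Delta> \<equiv> {u :: real ^ 'n.
              u \<bullet> real_vec (prim_gen (v None)) \<ge> - (real \<delta>' / real (reduction Q None)) \<and>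
              (\<forall>k. u \<bullet> real_vec (prim_gen (v (Some k))) \<ge> 0)}"
  shows "\<exists>w :: 'n \<Rightarrow> real ^ 'n.
           \<Delta> = convex hull (insert 0 (range w)) \<and>
           inj w \<and>
           (\<forall>k. w k \<noteq> 0 \<and> (\<exists>m :: int ^ 'n. w k = real_vec m)) \<and>
           (\<forall>i k. w k $ i = real \<delta> * real_of_int (cofactor_entry V0 i k)
                             / (real (Q (Some k)) * real_of_int (det V0)))"
proof -
  interpret F: weighted_fan Q v
  proof
    show "\<exists>k. k \<noteq> j" for j :: "'n option"
      by (cases j) auto
  qed (use wv rel dt in \<open>simp_all add: V0_def\<close>)
  have V0: "F.V0 = V0"
    by (simp add: V0_def F.V0_def)
  show ?thesis
  proof (rule exI[of _ F.transverse], intro conjI allI)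
    show "\<Delta> = convex hull (insert 0 (range F.transverse))"
      unfolding \<Delta>_def \<delta>'_def F.Delta_eq_polytope F.polytope_eq_convex_hull ..
    show "F.transverse k $ i = real \<delta> * of_int (cofactor_entry V0 i k) / (real (Q (Some k)) * of_int (det V0))"
      for i k
      by (simp add: F.transverse_def V0 \<delta>_def)
  qed (use F.inj_transverse F.transverse_nonzero F.transverse_integral in auto)
qed

end
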